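(* For every integer $n\ge 4$, the oriented path $Q_{n+1}$ is not homomorphic to $AC_n$.
   Context: For digraphs $G,H$, a homomorphism $G\to H$ is a map $\varphi:V_G\to V_H$ such that $(u,v)\in A_G$ implies $(\varphi(u),\varphi(v))\in A_H$. An oriented path $(p_0,\dots,p_k)$ consists of distinct vertices where for each $i$ exactly one of the arcs $p_ip_{i+1}$ (forward) or $p_{i+1}p_i$ (backward) is present, and no other arcs. For $n\ge 3$, $Q_n$ is the oriented path $(q_0,\dots,q_{n-1})$ on $n$ vertices such that: the first two arcs $q_0q_1$ and $q_1q_2$ are forward arcs; the subpath $(q_1,\dots,q_{n-2})$ is alternating (every two consecutive arcs have opposite directions); and the last two arcs (between $q_{n-3},q_{n-2}$ and between $q_{n-2},q_{n-1}$) have the same direction. For $n\ge 3$, $AC_n$ is the oriented cycle with vertices $a_0,\dots,a_{n-1}$ obtained from the alternating path $A_{n+1}=(a_0,\dots,a_n)$ — in which the arc between $a_i$ and $a_{i+1}$ is $a_i\to a_{i+1}$ if $i$ is even and $a_{i+1}\to a_i$ if $i$ is odd — by identifying $a_n$ with $a_0$. *)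

theory Defs
  imports Main
begin

type_synonym 'a digraph = "'a set \<times> ('a \<times> 'a) set"

definition verts :: "'a digraph \<Rightarrow> 'a set" where "verts G = fst G"
definition arcs :: "'a digraph \<Rightarrow> ('a \<times> 'a) set" where "arcs G = snd G"

definition is_hom :: "'a digraph \<Rightarrow> 'b digraph \<Rightarrow> ('a \<Rightarrow> 'b) \<Rightarrow> bool" where
  "is_hom G H \<phi> \<longleftrightarrow> (\<forall>v\<in>verts G. \<phi> v \<in> verts H) \<and>
     (\<forall>u v. (u, v) \<in> arcs G \<longrightarrow> (\<phi> u, \<phi> v) \<in> arcs H)"

definition homomorphic :: "'a digraph \<Rightarrow> 'b digraph \<Rightarrow> bool" where
  "homomorphic G H \<longleftrightarrow> (\<exists>\<phi>. is_hom G H \<phi>)"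

text \<open>Direction of the i-th arc (between q_i and q_(i+1)) of Q_n; True = forward.
  Arc 0 forward; arcs 1..n-3 alternate starting forward (arc 1 forward as arc q1q2);
  arc n-2 has the same direction as arc n-3.\<close>
definition Q_fwd :: "nat \<Rightarrow> nat \<Rightarrow> bool" where
  "Q_fwd n i \<longleftrightarrow> i = 0 \<or> (1 \<le> i \<and> i \<le> n - 3 \<and> odd i)
      \<or> (i = n - 2 \<and> (n - 3 = 0 \<or> odd (n - 3)))"

text \<open>Q_n on vertices 0..n-1 (vertex i = q_i), for n >= 3.\<close>
definition Q :: "nat \<Rightarrow> nat digraph" where
  "Q n = ({0..<n},
          {(i, i + 1) | i. i + 1 < n \<and> Q_fwd n i} \<union> {(i + 1, i) | i. i + 1 < n \<and> \<not> Q_fwd n i})"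

text \<open>AC_n on vertices 0..n-1 (vertex i = a_i, a_n identified with a_0).\<close>
definition AC :: "nat \<Rightarrow> nat digraph" where
  "AC n = ({0..<n},
           {(i, (i + 1) mod n) | i. i < n \<and> even i} \<union> {((i + 1) mod n, i) | i. i < n \<and> odd i})"

end

theory Submission
  imports Defs
begin

text \<open>Every arc of \<open>AC n\<close> joins cyclically consecutive vertices, so a walk in \<open>AC n\<close> of
  length \<open>k\<close> moves by a net displacement \<open>L\<close> with \<open>\<bar>L\<bar> \<le> k\<close> and \<open>L \<equiv> k (mod 2)\<close>; a closed
  walk of length \<open>k < n\<close> therefore has \<open>L = 0\<close> and even length. For even \<open>n\<close> the cycle
  \<open>AC n\<close> has no directed path of length two, while for odd \<open>n\<close> every such path has
  middle vertex \<open>a\<^sub>0\<close>. The path \<open>Q\<^sub>n\<^sub>+\<^sub>1\<close> begins and ends with two forward arcs,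
  whose middle vertices \<open>q\<^sub>1\<close> and \<open>q\<^sub>n\<^sub>-\<^sub>1\<close> must both be sent to \<open>a\<^sub>0\<close>; the image of the
  subpath between them is then a closed walk of odd length \<open>n - 2 < n\<close>.\<close>

definition cyclic_adjacent :: "nat \<Rightarrow> nat \<Rightarrow> nat \<Rightarrow> bool" where
  "cyclic_adjacent n a b \<longleftrightarrow>
     int b mod int n = (int a + 1) mod int n \<or> int b mod int n = (int a - 1) mod int n"

lemma cyclic_adjacent_Suc_mod: "cyclic_adjacent n a (Suc a mod n)"
  by (simp add: cyclic_adjacent_def zmod_int add.commute)

lemma cyclic_adjacent_sym: "cyclic_adjacent n a b \<Longrightarrow> cyclic_adjacent n b a"
  unfolding cyclic_adjacent_def by (metis add_diff_cancel_right' diff_add_cancel mod_add_left_eq mod_diff_left_eq)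

lemma AC_arc_cyclic_adjacent:
  assumes "(a, b) \<in> arcs (AC n)"
  shows "cyclic_adjacent n a b"
  using assms cyclic_adjacent_Suc_mod cyclic_adjacent_sym by (auto simp: AC_def arcs_def)

lemma cyclic_walk_displacement:
  assumes "\<And>j. j < k \<Longrightarrow> cyclic_adjacent n (f j) (f (Suc j))"
  shows "\<exists>L::int. \<bar>L\<bar> \<le> int k \<and> even (L + int k) \<and>
           int (f k) mod int n = (int (f 0) + L) mod int n"
  using assms
proof (induction k)
  case 0
  show ?case by (intro exI[of _ 0]) simp
next
  case (Suc k)
  then obtain L where L: "\<bar>L\<bar> \<le> int k" "even (L + int k)"
    and disp: "int (f k) mod int n = (int (f 0) + L) mod int n"
    by auto
  from Suc.prems[of k] consider
      (up) "int (f (Suc k)) mod int n = (int (f k) + 1) mod int n"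
    | (down) "int (f (Suc k)) mod int n = (int (f k) - 1) mod int n"
    unfolding cyclic_adjacent_def by auto
  then show ?case
  proof cases
    case up
    then have "int (f (Suc k)) mod int n = (int (f 0) + (L + 1)) mod int n"
      using disp by (metis add.assoc mod_add_left_eq)
    with L show ?thesis by (intro exI[of _ "L + 1"]) auto
  next
    case down
    then have "int (f (Suc k)) mod int n = (int (f 0) + (L - 1)) mod int n"
      using disp by (metis add_diff_eq mod_diff_left_eq)
    with L show ?thesis by (intro exI[of _ "L - 1"]) auto
  qed
qed

lemma cyclic_closed_walk_even:
  assumes "\<And>j. j < k \<Longrightarrow> cyclic_adjacent n (f j) (f (Suc j))"
    and "f k = f 0" and "k < n"
  shows "even k"
proof -
  obtain L :: int where L: "\<bar>L\<bar> \<le> int k" "even (L + int k)"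
    and "int (f k) mod int n = (int (f 0) + L) mod int n"
    using cyclic_walk_displacement[of k n f] assms(1) by blast
  with \<open>f k = f 0\<close> have "int n dvd L"
    by (simp add: mod_eq_dvd_iff dvd_minus_iff)
  moreover have "\<bar>L\<bar> < int n" using L(1) \<open>k < n\<close> by simp
  ultimately have "L = 0" by (metis dvd_imp_le_int abs_of_nat not_le)
  with L(2) show ?thesis by simp
qed

lemma AC_directed_2path_middle:
  assumes "(a, b) \<in> arcs (AC n)" and "(b, c) \<in> arcs (AC n)"
  shows "odd n \<and> b = 0"
  using assms unfolding AC_def arcs_def
  by (auto simp: mod_Suc split: if_splits)

lemma Q_arc_forward: "Suc i < m \<Longrightarrow> Q_fwd m i \<Longrightarrow> (i, Suc i) \<in> arcs (Q m)"
  by (auto simp: Q_def arcs_def)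

lemma Q_arc_backward: "Suc i < m \<Longrightarrow> \<not> Q_fwd m i \<Longrightarrow> (Suc i, i) \<in> arcs (Q m)"
  by (auto simp: Q_def arcs_def)

lemma Q_starts_forward: "m \<ge> 4 \<Longrightarrow> Q_fwd m 0 \<and> Q_fwd m 1"
  by (auto simp: Q_fwd_def)

lemma Q_ends_forward: "n \<ge> 3 \<Longrightarrow> odd n \<Longrightarrow> Q_fwd (n + 1) (n - 2) \<and> Q_fwd (n + 1) (n - 1)"
  by (auto simp: Q_fwd_def)

lemma hom_arc: "is_hom G H f \<Longrightarrow> (u, v) \<in> arcs G \<Longrightarrow> (f u, f v) \<in> arcs H"
  by (simp add: is_hom_def)

lemma hom_Q_AC_cyclic_adjacent:
  assumes "is_hom (Q m) (AC n) f" and "Suc i < m"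
  shows "cyclic_adjacent n (f i) (f (Suc i))"
proof (cases "Q_fwd m i")
  case True
  then show ?thesis
    using assms by (blast intro: AC_arc_cyclic_adjacent hom_arc Q_arc_forward)
next
  case False
  then show ?thesis
    using assms by (blast intro: AC_arc_cyclic_adjacent cyclic_adjacent_sym hom_arc Q_arc_backward)
qed

theorem mainTheorem5:
  fixes n :: nat
  assumes "n \<ge> 4"
  shows "\<not> homomorphic (Q (n + 1)) (AC n)"
proof
  assume "homomorphic (Q (n + 1)) (AC n)"
  then obtain f where hom: "is_hom (Q (n + 1)) (AC n) f"
    unfolding homomorphic_def by blast
  have forward: "(f i, f (Suc i)) \<in> arcs (AC n)" if "Suc i < n + 1" "Q_fwd (n + 1) i" for i
    using hom that by (blast intro: hom_arc Q_arc_forward)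
  have "odd n \<and> f 1 = 0"
    using AC_directed_2path_middle forward[of 0] forward[of 1] Q_starts_forward[of "n + 1"] assms
    by (simp add: numeral_2_eq_2)
  then have "odd n" and f1: "f 1 = 0" by auto
  have n2: "Suc (n - 2) = n - 1" using assms by simp
  have "Q_fwd (n + 1) (n - 2)" "Q_fwd (n + 1) (n - 1)"
    using Q_ends_forward[of n] \<open>odd n\<close> assms by simp_all
  then have "(f (n - 2), f (n - 1)) \<in> arcs (AC n)" "(f (n - 1), f n) \<in> arcs (AC n)"
    using forward[of "n - 2"] forward[of "n - 1"] assms n2 by simp_all
  then have "f (n - 1) = 0" by (blast dest: AC_directed_2path_middle)
  then have "even (n - 2)"
    using cyclic_closed_walk_even[of "n - 2" n "\<lambda>j. f (Suc j)"] f1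
      hom_Q_AC_cyclic_adjacent[OF hom] assms n2
    by simp
  with \<open>odd n\<close> assms show False by simp
qed

end
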